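(* Let $G=(V,E)$ be an undirected simple graph, let $k\ge 2$ be an integer, and let $e^*\in E$ satisfy $\tau_G(e^* )<k+1$. Then for every vertex $v\in V$, the edge $e^*$ is not contained in any connected component of the $k$-truss of the ego-network $G_{N(v)}$.
   Context: $N(v)$ is the set of neighbors of $v$ and $G_{N(v)}$ is the subgraph of $G$ induced by $N(v)$. For a subgraph $H$ and $e\in E(H)$, $\sup_H(e)$ is the number of triangles of $H$ containing $e$. The trussness of a subgraph $H$ with at least one edge is $\tau(H)=\min_{e\in E(H)}\sup_H(e)+2$, and the trussness of an edge $e$ in $G$ is $\tau_G(e)=\max\{\tau(H'):H'\subseteq G,\ e\in E(H')\}$. For an integer $k\ge 2$, the $k$-truss of a graph $H$ is the subgraph formed by the largest edge set $F\subseteq E(H)$ such that every edge of $F$ lies in at least $k-2$ triangles all of whose edges are in $F$. *)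

theory Defs
  imports Main
begin

definition simple_graph :: "'a set \<Rightarrow> 'a set set \<Rightarrow> bool" where
  "simple_graph V E \<longleftrightarrow> finite V \<and>
     (\<forall>e\<in>E. \<exists>x y. x \<noteq> y \<and> x \<in> V \<and> y \<in> V \<and> e = {x, y})"

definition nbhd :: "'a set set \<Rightarrow> 'a \<Rightarrow> 'a set" where
  "nbhd E v = {w. {v, w} \<in> E}"

definition induced_edges :: "'a set set \<Rightarrow> 'a set \<Rightarrow> 'a set set" where
  "induced_edges E S = {e \<in> E. e \<subseteq> S}"

definition subgraph :: "'a set \<Rightarrow> 'a set set \<Rightarrow> 'a set \<Rightarrow> 'a set set \<Rightarrow> bool" where
  "subgraph V E W F \<longleftrightarrow> W \<subseteq> V \<and> F \<subseteq> E \<and> (\<forall>e\<in>F. e \<subseteq> W)"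

text \<open>sup_H(e): number of triangles of H (edge set F) containing the edge e;
  a triangle containing e = {x,y} corresponds to its third vertex w.\<close>
definition sup_edge :: "'a set set \<Rightarrow> 'a set \<Rightarrow> nat" where
  "sup_edge F e = card {w. w \<notin> e \<and> (\<forall>x\<in>e. {x, w} \<in> F)}"

text \<open>Trussness of a subgraph with edge set F (assumed non-empty).\<close>
definition trussness :: "'a set set \<Rightarrow> nat" where
  "trussness F = Min (sup_edge F ` F) + 2"

definition edge_trussness :: "'a set \<Rightarrow> 'a set set \<Rightarrow> 'a set \<Rightarrow> nat" where
  "edge_trussness V E e =
     Max {trussness F | W F. subgraph V E W F \<and> e \<in> F}"

definition k_truss :: "nat \<Rightarrow> 'a set set \<Rightarrow> 'a set set" where
  "k_truss k E = (GREATEST F. F \<subseteq> E \<and> (\<forall>e\<in>F. k - 2 \<le> sup_edge F e))"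

text \<open>Connected components of the graph formed by an edge set F
  (vertex set: the vertices incident to F). A component is given by its vertex
  set S; its edges are those of F inside S.\<close>
definition adj :: "'a set set \<Rightarrow> 'a \<Rightarrow> 'a \<Rightarrow> bool" where
  "adj F x y \<longleftrightarrow> {x, y} \<in> F"

definition components :: "'a set set \<Rightarrow> 'a set set" where
  "components F = {S. \<exists>u \<in> \<Union>F. S = {w. (adj F)\<^sup>*\<^sup>* u w}}"

definition component_edges :: "'a set set \<Rightarrow> 'a set \<Rightarrow> 'a set set" where
  "component_edges F S = {e \<in> F. e \<subseteq> S}"

end

theory Submission
  imports Defs
begin

text \<open>Coning a subgraph T of the ego-network of v from v yields a subgraph of G in
  which each edge of T gains v as one more triangle apex, while a spoke {v,x} lies in
  one triangle per T-neighbour of x, which is more than the support of any T-edge at x.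
  So if every edge of T lies in at least s triangles of T, every edge of the cone lies
  in at least s+1 triangles, and the edges of T have trussness at least s+3 in G.
  For the k-truss (s = k-2) this is k+1: an edge of smaller trussness does not even
  lie in the k-truss of any ego-network.\<close>

lemma sup_edge_pair:
  "sup_edge F {x, y} = card {w. w \<notin> {x, y} \<and> {x, w} \<in> F \<and> {y, w} \<in> F}"
  unfolding sup_edge_def by simp

lemma sup_edge_mono:
  assumes "finite (\<Union>G)" and "F \<subseteq> G" and "e \<noteq> {}"
  shows "sup_edge F e \<le> sup_edge G e"
proof -
  obtain a where "a \<in> e" using assms(3) by blast
  then have "{w. w \<notin> e \<and> (\<forall>x\<in>e. {x, w} \<in> G)} \<subseteq> \<Union>G" by blast
  then have "finite {w. w \<notin> e \<and> (\<forall>x\<in>e. {x, w} \<in> G)}"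
    using assms(1) by (rule finite_subset)
  then show ?thesis
    unfolding sup_edge_def by (rule card_mono) (use assms(2) in blast)
qed

lemma simple_graph_edge_subset: "simple_graph V E \<Longrightarrow> e \<in> E \<Longrightarrow> e \<subseteq> V"
  unfolding simple_graph_def by force

lemma simple_graph_finite_edges:
  assumes "simple_graph V E"
  shows "finite E"
proof -
  have "E \<subseteq> Pow V" using simple_graph_edge_subset[OF assms] by blast
  moreover have "finite V" using assms unfolding simple_graph_def by blast
  ultimately show ?thesis by (simp add: finite_subset)
qed

lemma simple_graph_finite_Union: "simple_graph V E \<Longrightarrow> finite (\<Union>E)"
  by (meson Union_least finite_subset simple_graph_def simple_graph_edge_subset)

lemma simple_graph_mono: "simple_graph V E \<Longrightarrow> F \<subseteq> E \<Longrightarrow> simple_graph V F"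
  unfolding simple_graph_def by blast

lemma simple_graph_no_loop: "simple_graph V E \<Longrightarrow> {x} \<notin> E"
  unfolding simple_graph_def by (metis doubleton_eq_iff insert_absorb2)

lemma nbhd_not_self: "simple_graph V E \<Longrightarrow> v \<notin> nbhd E v"
  unfolding nbhd_def using simple_graph_no_loop by fastforce

lemma sup_edge_less_degree:
  assumes "simple_graph V T" and "{x, y} \<in> T"
  shows "sup_edge T {x, y} < card {w. {x, w} \<in> T}"
proof -
  let ?A = "{w. w \<notin> {x, y} \<and> {x, w} \<in> T \<and> {y, w} \<in> T}"
  have "insert y ?A \<subseteq> {w. {x, w} \<in> T}" using assms(2) by blast
  moreover have "finite {w. {x, w} \<in> T}"
    using simple_graph_finite_Union[OF assms(1)] by (rule rev_finite_subset) blast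
  ultimately have "card (insert y ?A) \<le> card {w. {x, w} \<in> T}"
    by (rule card_mono[rotated])
  moreover have "finite ?A" using \<open>finite {w. {x, w} \<in> T}\<close> by (rule rev_finite_subset) blast
  ultimately show ?thesis by (simp add: sup_edge_pair)
qed

definition is_truss_of :: "nat \<Rightarrow> 'a set set \<Rightarrow> 'a set set \<Rightarrow> bool" where
  "is_truss_of k E F \<longleftrightarrow> F \<subseteq> E \<and> (\<forall>e\<in>F. k - 2 \<le> sup_edge F e)"

lemma is_truss_of_Union:
  assumes "simple_graph V E"
  shows "is_truss_of k E (\<Union>{F. is_truss_of k E F})"
proof -
  let ?U = "\<Union>{F. is_truss_of k E F}"
  have "?U \<subseteq> E" unfolding is_truss_of_def by blast
  have "k - 2 \<le> sup_edge ?U e" if "e \<in> ?U" for e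
  proof -
    obtain F where F: "is_truss_of k E F" "e \<in> F" using \<open>e \<in> ?U\<close> by blast
    have "finite (\<Union>?U)"
      using simple_graph_finite_Union[OF simple_graph_mono[OF assms \<open>?U \<subseteq> E\<close>]] .
    moreover have "F \<subseteq> ?U" using F(1) by blast
    moreover have "e \<noteq> {}"
      using F assms unfolding is_truss_of_def simple_graph_def by blast
    ultimately have "sup_edge F e \<le> sup_edge ?U e" by (rule sup_edge_mono)
    then show ?thesis using F unfolding is_truss_of_def by force
  qed
  with \<open>?U \<subseteq> E\<close> show ?thesis unfolding is_truss_of_def by blast
qed

lemma k_truss_is_truss_of:
  assumes "simple_graph V E"
  shows "is_truss_of k E (k_truss k E)"
proof -
  have "is_truss_of k E (GREATEST F. is_truss_of k E F)"
    by (rule GreatestI2_order[of _ "\<Union>{F. is_truss_of k E F}"])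
      (use is_truss_of_Union[OF assms] in blast)+
  then show ?thesis unfolding k_truss_def is_truss_of_def .
qed

definition cone :: "'a \<Rightarrow> 'a set set \<Rightarrow> 'a set set" where
  "cone v T = T \<union> (\<lambda>x. {v, x}) ` \<Union>T"

lemma doubleton_in_cone_iff:
  "x \<noteq> v \<Longrightarrow> {x, w} \<in> cone v T \<longleftrightarrow> {x, w} \<in> T \<or> (w = v \<and> x \<in> \<Union>T)"
  unfolding cone_def by (auto simp: doubleton_eq_iff insert_commute)

lemma sup_edge_cone_old_edge:
  assumes "simple_graph V T" and "v \<notin> \<Union>T" and "{x, y} \<in> T"
  shows "sup_edge (cone v T) {x, y} = Suc (sup_edge T {x, y})"
proof -
  let ?A = "{w. w \<notin> {x, y} \<and> {x, w} \<in> T \<and> {y, w} \<in> T}"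
  have "x \<noteq> v" "y \<noteq> v" "x \<in> \<Union>T" "y \<in> \<Union>T" using assms(2,3) by blast+
  then have "{w. w \<notin> {x, y} \<and> {x, w} \<in> cone v T \<and> {y, w} \<in> cone v T} = insert v ?A"
    by (auto simp: doubleton_in_cone_iff)
  moreover have "finite ?A"
    using simple_graph_finite_Union[OF assms(1)] by (rule rev_finite_subset) blast
  moreover have "v \<notin> ?A" using assms(2) by blast
  ultimately show ?thesis by (simp add: sup_edge_pair)
qed

lemma sup_edge_cone_spoke:
  assumes "simple_graph V T" and "v \<notin> \<Union>T" and "x \<noteq> v"
  shows "sup_edge (cone v T) {v, x} = card {w. {x, w} \<in> T}"
proof -
  have "w \<notin> {v, x} \<and> {v, w} \<in> cone v T \<and> {x, w} \<in> cone v T \<longleftrightarrow> {x, w} \<in> T" for w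
  proof
    assume "{x, w} \<in> T"
    then have "w \<noteq> v" "w \<noteq> x" "w \<in> \<Union>T"
      using assms(2) simple_graph_no_loop[OF assms(1), of x] by auto
    then show "w \<notin> {v, x} \<and> {v, w} \<in> cone v T \<and> {x, w} \<in> cone v T"
      using \<open>{x, w} \<in> T\<close> unfolding cone_def by blast
  qed (use assms(3) in \<open>auto simp: doubleton_in_cone_iff\<close>)
  then show ?thesis by (simp add: sup_edge_pair)
qed

lemma sup_edge_cone_ge:
  assumes "simple_graph V T" and "v \<notin> \<Union>T" and "\<forall>e\<in>T. s \<le> sup_edge T e"
    and "e \<in> cone v T"
  shows "Suc s \<le> sup_edge (cone v T) e"
proof (cases "e \<in> T")
  case True
  then obtain x y where "e = {x, y}" using assms(1) unfolding simple_graph_def by blast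
  then show ?thesis using sup_edge_cone_old_edge[OF assms(1,2)] assms(3) True by simp
next
  case False
  then obtain x where "x \<in> \<Union>T" and e: "e = {v, x}"
    using assms(4) unfolding cone_def by auto
  then obtain y where xy: "{x, y} \<in> T"
    using assms(1) unfolding simple_graph_def by (force simp: insert_commute)
  have "x \<noteq> v" using assms(2) \<open>x \<in> \<Union>T\<close> by blast
  have "s \<le> sup_edge T {x, y}" using assms(3) xy by blast
  also have "\<dots> < card {w. {x, w} \<in> T}" using assms(1) xy by (rule sup_edge_less_degree)
  also have "\<dots> = sup_edge (cone v T) e"
    unfolding e using assms(1,2) \<open>x \<noteq> v\<close> by (rule sup_edge_cone_spoke[symmetric])
  finally show ?thesis by simp
qed

lemma cone_nbhd_subset: "T \<subseteq> induced_edges E (nbhd E v) \<Longrightarrow> cone v T \<subseteq> E"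
  unfolding cone_def induced_edges_def nbhd_def by blast

lemma trussness_ge:
  assumes "finite F" and "e \<in> F" and "\<forall>e\<in>F. s \<le> sup_edge F e"
  shows "s + 2 \<le> trussness F"
proof -
  have "sup_edge F ` F \<noteq> {}" using assms(2) by blast
  then show ?thesis unfolding trussness_def using assms(1,3) by (simp add: Min_ge_iff)
qed

lemma trussness_le_edge_trussness:
  assumes "simple_graph V E" and "subgraph V E W F" and "e \<in> F"
  shows "trussness F \<le> edge_trussness V E e"
proof -
  have "{trussness F | W F. subgraph V E W F \<and> e \<in> F} \<subseteq> trussness ` Pow E"
    unfolding subgraph_def by blast
  then have "finite {trussness F | W F. subgraph V E W F \<and> e \<in> F}"
    using simple_graph_finite_edges[OF assms(1)] by (meson finite_Pow_iff finite_imageI finite_subset)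
  then show ?thesis
    unfolding edge_trussness_def using assms(2,3) by (intro Max_ge) blast+
qed

lemma edge_trussness_ge_ego_subgraph:
  assumes "simple_graph V E" and "T \<subseteq> induced_edges E (nbhd E v)"
    and "\<forall>e\<in>T. s \<le> sup_edge T e" and "e \<in> T"
  shows "s + 3 \<le> edge_trussness V E e"
proof -
  have "cone v T \<subseteq> E" using assms(2) by (rule cone_nbhd_subset)
  have "T \<subseteq> E" using assms(2) unfolding induced_edges_def by blast
  then have "simple_graph V T" by (rule simple_graph_mono[OF assms(1)])
  moreover have "v \<notin> \<Union>T"
  proof -
    have "\<Union>T \<subseteq> nbhd E v" using assms(2) unfolding induced_edges_def by auto
    then show ?thesis using nbhd_not_self[OF assms(1)] by blast
  qed
  ultimately have "\<forall>e\<in>cone v T. Suc s \<le> sup_edge (cone v T) e"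
    using assms(3) by (blast intro: sup_edge_cone_ge)
  moreover have "finite (cone v T)"
    using \<open>cone v T \<subseteq> E\<close> simple_graph_finite_edges[OF assms(1)] by (rule finite_subset)
  moreover have "e \<in> cone v T" using assms(4) unfolding cone_def by blast
  ultimately have "Suc s + 2 \<le> trussness (cone v T)" by (intro trussness_ge)
  also have "\<dots> \<le> edge_trussness V E e"
  proof (rule trussness_le_edge_trussness[OF assms(1)])
    show "subgraph V E V (cone v T)"
      unfolding subgraph_def using \<open>cone v T \<subseteq> E\<close> simple_graph_edge_subset[OF assms(1)] by blast
  qed (rule \<open>e \<in> cone v T\<close>)
  finally show ?thesis by simp
qed

theorem mainTheorem4:
  fixes V :: "'a set" and E :: "'a set set" and k :: nat and e0 :: "'a set"
  assumes "simple_graph V E"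
    and "k \<ge> 2"
    and "e0 \<in> E"
    and "edge_trussness V E e0 < k + 1"
  shows "\<forall>v\<in>V. \<forall>S \<in> components (k_truss k (induced_edges E (nbhd E v))).
           e0 \<notin> component_edges (k_truss k (induced_edges E (nbhd E v))) S"
proof (intro ballI notI)
  fix v S
  let ?N = "induced_edges E (nbhd E v)"
  assume "e0 \<in> component_edges (k_truss k ?N) S"
  then have "e0 \<in> k_truss k ?N" unfolding component_edges_def by blast
  have "simple_graph V ?N"
    using assms(1) by (rule simple_graph_mono) (auto simp: induced_edges_def)
  then have "is_truss_of k ?N (k_truss k ?N)" by (rule k_truss_is_truss_of)
  then have "k - 2 + 3 \<le> edge_trussness V E e0"
    using assms(1) \<open>e0 \<in> k_truss k ?N\<close> unfolding is_truss_of_def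
    by (blast intro: edge_trussness_ge_ego_subgraph)
  then show False using assms(2,4) by arith
qed

end
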